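(* For any measurable $f:\mathbb R^p\times[K]\to\mathbb R$, any joint distribution $\mathbb P$ of $(\boldsymbol X,S,Y)$ and any $\sigma>0$, the randomized predictor $\hat\Pi(f)$ defined in the context satisfies $$\mathrm{Law}\big(\hat\Pi(f)(\boldsymbol X,S)\mid S=s\big)=\mathrm{Law}\big(\hat\Pi(f)(\boldsymbol X,S)\mid S=s'\big)\qquad\forall s,s'\in[K],$$ where the law involves all the randomness in $\hat\Pi(f)(\boldsymbol X,S)$ (the auxiliary samples, the noises and $(\boldsymbol X,S)$).
   Context: Let $(\boldsymbol X,S,Y)\sim\mathbb P$ on $\mathbb R^p\times[K]\times\mathbb R$ with $\mathbb P(S=s)>0$ for all $s$, and fix $\boldsymbol w\in\Delta^{K-1}$. For each $s\in[K]$, let $\boldsymbol X^s_1,\dots,\boldsymbol X^s_{2N_s}$ be i.i.d. from $\mathrm{Law}(\boldsymbol X\mid S=s)$, independent of $(\boldsymbol X,S,Y)$ and of all other variables. Let $\zeta$ and $(\zeta^s_i)_{s\in[K],i\le2N_s}$ be i.i.d. uniform on $[-\sigma,\sigma]$, and $(U^s)_{s\in[K]}$ i.i.d. uniform on $[0,1]$, all mutually independent and independent of everything else. Set $\tilde f^s_i=f(\boldsymbol X^s_i,s)+\zeta^s_i$ and $\tilde f(\boldsymbol x,s)=f(\boldsymbol x,s)+\zeta$. Define for $t\in\mathbb R$: $\hat F_{1,s}(t)=\frac1{N_s+1}\big(\sum_{i=1}^{N_s}\mathbf 1\{\tilde f^s_i<t\}+U^s(1+\sum_{i=1}^{N_s}\mathbf1\{\tilde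 f^s_i=t\})\big)$ and $\hat F_{2,s}(t)=\frac1{N_s}\sum_{i=N_s+1}^{2N_s}\mathbf1\{\tilde f^s_i\le t\}$, with generalized inverse $\hat F_{2,s}^{-1}(u)=\inf\{x:\hat F_{2,s}(x)\ge u\}$. Then $\hat\Pi(f)(\boldsymbol x,s)=\sum_{s'=1}^Kw_{s'}\hat F^{-1}_{2,s'}\circ\hat F_{1,s}\circ\tilde f(\boldsymbol x,s)$. *)

theory Defs
  imports "HOL-Probability.Probability"
begin

text \<open>Joint law P of (X,S,Y) lives on (real^'p) \<times> nat \<times> real.
  Component projections.\<close>

definition Sof :: "('x \<times> nat \<times> real) \<Rightarrow> nat" where
  "Sof z = fst (snd z)"

definition unif :: "real \<Rightarrow> real \<Rightarrow> real measure" where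
  "unif a b = uniform_measure lborel {a..b}"

definition cond_law :: "'a measure \<Rightarrow> 'a set \<Rightarrow> ('a \<Rightarrow> 'b::topological_space) \<Rightarrow> 'b measure" where
  "cond_law M E Z = distr (uniform_measure M E) borel Z"

definition lawX_given_S :: "(('x::topological_space) \<times> nat \<times> real) measure \<Rightarrow> nat \<Rightarrow> 'x measure" where
  "lawX_given_S P s = cond_law P {z \<in> space P. Sof z = s} fst"

definition samp_idx :: "nat \<Rightarrow> (nat \<Rightarrow> nat) \<Rightarrow> (nat \<times> nat) set" where
  "samp_idx K N = {(s,i). s \<in> {1..K} \<and> i \<in> {1..2 * N s}}"

text \<open>The underlying probability space: (X,S,Y) ~ P, independent auxiliary samples
  X^s_i ~ Law(X | S = s), zeta ~ U[-sigma,sigma], zeta^s_i ~ U[-sigma,sigma], U^s ~ U[0,1],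
  all mutually independent (product measure).\<close>
definition Omega ::
  "(('x::topological_space) \<times> nat \<times> real) measure \<Rightarrow> nat \<Rightarrow> (nat \<Rightarrow> nat) \<Rightarrow> real \<Rightarrow>
   (('x \<times> nat \<times> real) \<times> (nat \<times> nat \<Rightarrow> 'x) \<times> real \<times> (nat \<times> nat \<Rightarrow> real) \<times> (nat \<Rightarrow> real)) measure" where
  "Omega P K N \<sigma> =
     P \<Otimes>\<^sub>M (PiM (samp_idx K N) (\<lambda>(s,i). lawX_given_S P s)) \<Otimes>\<^sub>M unif (-\<sigma>) \<sigma>
       \<Otimes>\<^sub>M (PiM (samp_idx K N) (\<lambda>_. unif (-\<sigma>) \<sigma>)) \<Otimes>\<^sub>M (PiM {1..K} (\<lambda>_. unif 0 1))"

text \<open>hat F_{1,s}(t), with ft i = tilde f^s_i and u = U^s.\<close>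
definition F1hat :: "nat \<Rightarrow> (nat \<Rightarrow> real) \<Rightarrow> real \<Rightarrow> real \<Rightarrow> real" where
  "F1hat n ft u t =
     ((\<Sum>i\<in>{1..n}. if ft i < t then 1 else 0)
       + u * (1 + (\<Sum>i\<in>{1..n}. if ft i = t then 1 else 0))) / (real n + 1)"

definition F2hat :: "nat \<Rightarrow> (nat \<Rightarrow> real) \<Rightarrow> real \<Rightarrow> real" where
  "F2hat n ft t = (\<Sum>i\<in>{n+1..2*n}. if ft i \<le> t then 1 else 0) / real n"

definition geninv :: "(real \<Rightarrow> real) \<Rightarrow> real \<Rightarrow> real" where
  "geninv F u = Inf {x. u \<le> F x}"

definition Pihat ::
  "('x \<Rightarrow> nat \<Rightarrow> real) \<Rightarrow> (nat \<Rightarrow> real) \<Rightarrow> nat \<Rightarrow> (nat \<Rightarrow> nat) \<Rightarrow>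
   (('x \<times> nat \<times> real) \<times> (nat \<times> nat \<Rightarrow> 'x) \<times> real \<times> (nat \<times> nat \<Rightarrow> real) \<times> (nat \<Rightarrow> real)) \<Rightarrow> real" where
  "Pihat f w K N \<omega> =
     (case \<omega> of (z, xs, \<zeta>, \<zeta>s, us) \<Rightarrow>
       let x = fst z; s = Sof z;
           ft = (\<lambda>s' i. f (xs (s', i)) s' + \<zeta>s (s', i))
       in (\<Sum>s'\<in>{1..K}. w s' * geninv (F2hat (N s') (ft s'))
                                  (F1hat (N s) (ft s) (us s) (f x s + \<zeta>))))"

end

(*
  Fix a group s. Given S = s, the test covariate X has the law of the group-s samples, so it can
  be pooled with them as one more sample. The first N_s samples of the group together with the test
  point give N_s + 1 exchangeable noisy scores, and exchanging the test point with the j-th of them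
  turns F1_s at the test score into the randomized rank of the j-th score. Averaged over j, a
  randomized rank is uniformly distributed on [0, 1] whatever the ties: the intervals it sweeps
  tile [0, 1]. It is moreover independent of the second halves of the samples, which alone
  determine the quantile functions F2_s'^-1. So given S = s, the prediction has the law of
  sum_s' w_s' F2_s'^-1(V) with V uniform and independent of those samples, whatever s is.
*)

theory Submission
  imports Defs "HOL-Combinatorics.Transposition"
begin

section \<open>Randomized ranks\<close>

definition clip :: "real \<Rightarrow> real \<Rightarrow> real" where
  "clip c x = min c (max 0 x)"

lemma clip_add:
  assumes "a \<ge> 0" "c \<ge> 0"
  shows "clip a x + clip c (x - a) = clip (a + c) x"
  using assms unfolding clip_def by (auto simp: min_def max_def)

lemma clip_scale:
  assumes "c > 0"
  shows "clip c (c * x) = c * clip 1 x"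
  using assms unfolding clip_def
  by (auto simp: min_def max_def mult_le_cancel_left1 zero_le_mult_iff)

text \<open>\<open>clip c x\<close> is the length of \<open>[0, c] \<inter> (-\<infinity>, x]\<close>. Intervals of lengths \<open>c v\<close>, laid end to end
  in increasing order of \<open>v\<close>, tile \<open>[0, \<Sum>c]\<close>.\<close>
lemma sum_clip_tiling:
  fixes V :: "'a::linorder set"
  assumes "finite V" "\<And>v. v \<in> V \<Longrightarrow> c v \<ge> 0"
  shows "(\<Sum>v\<in>V. clip (c v) (x - (\<Sum>v'\<in>{v'\<in>V. v' < v}. c v'))) = clip (sum c V) x"
  using assms
proof (induction V rule: finite_linorder_max_induct)
  case empty
  then show ?case by (simp add: clip_def)
next
  case (insert b A)
  have "b \<notin> A"
    using insert by auto
  have below_b: "{v'\<in>insert b A. v' < b} = A"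
    using insert by auto
  have below_A: "{v'\<in>insert b A. v' < v} = {v'\<in>A. v' < v}" if "v \<in> A" for v
    using insert that by auto
  have "(\<Sum>v\<in>insert b A. clip (c v) (x - (\<Sum>v'\<in>{v'\<in>insert b A. v' < v}. c v')))
      = clip (c b) (x - sum c A) + (\<Sum>v\<in>A. clip (c v) (x - (\<Sum>v'\<in>{v'\<in>A. v' < v}. c v')))"
    using insert.hyps \<open>b \<notin> A\<close> below_b below_A by (simp cong: sum.cong)
  also have "\<dots> = clip (sum c A) x + clip (c b) (x - sum c A)"
    using insert by simp
  also have "\<dots> = clip (sum c (insert b A)) x"
    using insert \<open>b \<notin> A\<close> by (simp add: clip_add sum_nonneg add.commute)
  finally show ?case .
qed

definition randomized_rank :: "(nat \<Rightarrow> real) \<Rightarrow> nat \<Rightarrow> nat \<Rightarrow> real \<Rightarrow> real" where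
  "randomized_rank Y n j v =
     (real (card {i\<in>{0..n}. Y i < Y j}) + v * real (card {i\<in>{0..n}. Y i = Y j})) / (real n + 1)"

lemma sum_clip_randomized_rank:
  fixes Y :: "nat \<Rightarrow> real"
  shows "(\<Sum>j\<in>{0..n}. clip 1 ((x - real (card {i\<in>{0..n}. Y i < Y j})) / real (card {i\<in>{0..n}. Y i = Y j})))
       = clip (real n + 1) x"
proof -
  define V where "V = Y ` {0..n}"
  define cnt where "cnt v = real (card {i\<in>{0..n}. Y i = v})" for v
  have cnt_pos: "cnt v > 0" if "v \<in> V" for v
    using that unfolding cnt_def V_def by (auto simp: card_gt_0_iff)
  have card_level_sets: "real (card A) = (\<Sum>v\<in>Y ` A. real (card {i\<in>A. Y i = v}))" if "finite A" for A
    using sum.image_gen[OF that, of "\<lambda>_. 1::real" Y] by simp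
  have card_below: "real (card {i\<in>{0..n}. Y i < v}) = (\<Sum>v'\<in>{v'\<in>V. v' < v}. cnt v')" for v
  proof -
    have "Y ` {i\<in>{0..n}. Y i < v} = {v'\<in>V. v' < v}"
      unfolding V_def by auto
    then show ?thesis
      using card_level_sets[of "{i\<in>{0..n}. Y i < v}"] unfolding cnt_def
      by (simp cong: conj_cong) (intro sum.cong refl arg_cong[where f="\<lambda>A. real (card A)"]; auto)
  qed
  have "(\<Sum>j\<in>{0..n}. clip 1 ((x - real (card {i\<in>{0..n}. Y i < Y j})) / cnt (Y j)))
      = (\<Sum>v\<in>V. cnt v * clip 1 ((x - real (card {i\<in>{0..n}. Y i < v})) / cnt v))"
    unfolding V_def cnt_def by (subst sum.image_gen[of "{0..n}" _ Y]) simp_all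
  also have "\<dots> = (\<Sum>v\<in>V. clip (cnt v) (x - (\<Sum>v'\<in>{v'\<in>V. v' < v}. cnt v')))"
  proof (intro sum.cong refl)
    fix v assume "v \<in> V"
    with cnt_pos have "cnt v > 0" by blast
    then show "cnt v * clip 1 ((x - real (card {i\<in>{0..n}. Y i < v})) / cnt v)
        = clip (cnt v) (x - (\<Sum>v'\<in>{v'\<in>V. v' < v}. cnt v'))"
      unfolding card_below clip_def by (auto simp: min_def max_def field_simps)
  qed
  also have "\<dots> = clip (sum cnt V) x"
    by (rule sum_clip_tiling) (auto simp: V_def cnt_def)
  also have "sum cnt V = real n + 1"
    using card_level_sets[of "{0..n}"] unfolding V_def cnt_def by simp
  finally show ?thesis
    unfolding cnt_def by simp
qed

lemma space_unif [simp]: "space (unif a b) = UNIV"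
  by (simp add: unif_def)

lemma sets_unif [simp, measurable_cong]: "sets (unif a b) = sets borel"
  by (simp add: unif_def)

lemma prob_space_unif: "a < b \<Longrightarrow> prob_space (unif a b)"
  unfolding unif_def by (rule prob_space_uniform_measure) auto

lemma emeasure_unif01_greaterThan: "emeasure (unif 0 1) {x<..} = ennreal (1 - clip 1 x)"
proof -
  consider "x < 0" | "0 \<le> x" "x < 1" | "1 \<le> x"
    by linarith
  then have "emeasure lborel ({0..1} \<inter> {x<..}) = ennreal (1 - clip 1 x)"
  proof cases
    case 1
    then have "{0..1} \<inter> {x<..} = {0..(1::real)}" by auto
    then show ?thesis using 1 by (simp add: clip_def)
  next
    case 2
    then have "{0..1} \<inter> {x<..} = {x<..(1::real)}" by auto
    then show ?thesis using 2 by (simp add: clip_def)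
  next
    case 3
    then have "{0..1} \<inter> {x<..} = ({}::real set)" by auto
    then show ?thesis using 3 by (simp add: clip_def)
  qed
  then show ?thesis
    unfolding unif_def by (simp add: divide_ennreal_def)
qed

lemma randomized_rank_measurable [measurable]: "randomized_rank Y n j \<in> borel_measurable borel"
  unfolding randomized_rank_def by measurable

lemma randomized_rank_greaterThan_preimage:
  assumes "j \<le> n"
  shows "{v. x < randomized_rank Y n j v}
       = {(x * (real n + 1) - card {i\<in>{0..n}. Y i < Y j}) / card {i\<in>{0..n}. Y i = Y j}<..}"
proof -
  have "card {i\<in>{0..n}. Y i = Y j} > 0"
    using assms by (auto simp: card_gt_0_iff)
  then show ?thesis
    unfolding randomized_rank_def by (auto simp: field_simps)
qed

lemma sum_emeasure_randomized_rank_greaterThan: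
  "(\<Sum>j\<in>{0..n}. emeasure (unif 0 1) {v. x < randomized_rank Y n j v})
     = (real n + 1) * emeasure (unif 0 1) {x<..}"
proof -
  have "(\<Sum>j\<in>{0..n}. emeasure (unif 0 1) {v. x < randomized_rank Y n j v}) = (\<Sum>j\<in>{0..n}. ennreal (1 - clip 1
      ((x * (real n + 1) - card {i\<in>{0..n}. Y i < Y j}) / card {i\<in>{0..n}. Y i = Y j})))"
    by (simp add: randomized_rank_greaterThan_preimage emeasure_unif01_greaterThan)
  also have "\<dots> = ennreal (\<Sum>j\<in>{0..n}. 1 - clip 1
      ((x * (real n + 1) - card {i\<in>{0..n}. Y i < Y j}) / card {i\<in>{0..n}. Y i = Y j}))"
    by (rule sum_ennreal) (simp add: clip_def)
  also have "\<dots> = ennreal ((real n + 1) - clip (real n + 1) (x * (real n + 1)))"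
    by (simp only: sum_subtractf sum_clip_randomized_rank) (simp add: add.commute)
  also have "(real n + 1) - clip (real n + 1) (x * (real n + 1)) = (real n + 1) * (1 - clip 1 x)"
    by (simp add: mult.commute[of x] clip_scale right_diff_distrib)
  finally show ?thesis
    by (simp add: emeasure_unif01_greaterThan ennreal_mult clip_def)
qed

lemma (in sigma_finite_measure) emeasure_distr_pair_measure:
  assumes "(\<lambda>(a, v). G a v) \<in> borel_measurable (N \<Otimes>\<^sub>M M)" "T \<in> sets borel"
  shows "emeasure (distr (N \<Otimes>\<^sub>M M) borel (\<lambda>(a, v). G a v)) T
       = (\<integral>\<^sup>+a. emeasure M {v \<in> space M. G a v \<in> T} \<partial>N)"
  using assms measurable_sets[OF assms]
  by (auto simp: emeasure_distr emeasure_pair_measure_alt space_pair_measure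
      intro!: nn_integral_cong arg_cong[where f="emeasure M"])

lemma sum_emeasure_randomized_rank:
  assumes B: "B \<in> sets borel"
  shows "(\<Sum>j\<in>{0..n}. emeasure (unif 0 1) {v. randomized_rank Y n j v \<in> B})
       = (real n + 1) * emeasure (unif 0 1) B"
proof -
  let ?C = "count_space {0..n} :: nat measure"
  let ?U = "unif 0 (1::real)"
  interpret U: prob_space ?U
    by (rule prob_space_unif) simp
  have rank_measurable: "(\<lambda>(j, v). randomized_rank Y n j v) \<in> borel_measurable (?C \<Otimes>\<^sub>M ?U)"
    by (rule measurable_pair_measure_countable1) simp_all
  define \<nu> where "\<nu> = distr (?C \<Otimes>\<^sub>M ?U) borel (\<lambda>(j, v). randomized_rank Y n j v)"
  have emeasure_\<nu>: "emeasure \<nu> A = (\<Sum>j\<in>{0..n}. emeasure ?U {v. randomized_rank Y n j v \<in> A})"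
    if "A \<in> sets borel" for A
    unfolding \<nu>_def U.emeasure_distr_pair_measure[OF rank_measurable that]
    by (simp add: nn_integral_count_space_finite)
  have "\<nu> = scale_measure (real n + 1) ?U"
    by (rule measure_eqI_lessThan)
       (simp_all add: \<nu>_def[symmetric] emeasure_\<nu> sum_emeasure_randomized_rank_greaterThan
        emeasure_unif01_greaterThan ennreal_mult_less_top, simp add: \<nu>_def)
  then show ?thesis
    using emeasure_\<nu>[OF B] B by simp
qed

lemma sum_indicator_eq_card: "finite A \<Longrightarrow> (\<Sum>i\<in>A. if P i then 1 else 0) = real (card {i\<in>A. P i})"
  by (simp add: sum.inter_filter[symmetric])

lemma randomized_rank_measurable_comp [measurable]:
  assumes [measurable]: "\<And>i. (\<lambda>x. Y x i) \<in> borel_measurable M" "v \<in> borel_measurable M"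
  shows "(\<lambda>x. randomized_rank (Y x) n j (v x)) \<in> borel_measurable M"
  unfolding randomized_rank_def sum_indicator_eq_card[symmetric, OF finite_atLeastAtMost] by measurable

lemma measurable_compose_randomized_rank:
  assumes H: "(\<lambda>(a, v). H a v) \<in> borel_measurable (M \<Otimes>\<^sub>M unif 0 1)"
    and Y[measurable]: "\<And>i. (\<lambda>a. Y a i) \<in> borel_measurable M"
  shows "(\<lambda>(a, v). H a (randomized_rank (Y a) n j v)) \<in> borel_measurable (M \<Otimes>\<^sub>M unif 0 1)"
  using measurable_compose[of "\<lambda>(a, v). (a, randomized_rank (Y a) n j v)" _ "M \<Otimes>\<^sub>M unif 0 1", OF _ H]
  by (simp add: case_prod_beta')

lemma sum_emeasure_distr_randomized_rank:
  assumes "sigma_finite_measure M"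
    and H[measurable]: "(\<lambda>(a, v). H a v) \<in> borel_measurable (M \<Otimes>\<^sub>M unif 0 1)"
    and Y[measurable]: "\<And>i. (\<lambda>a. Y a i) \<in> borel_measurable M"
    and T: "T \<in> sets borel"
  shows "(\<Sum>j\<in>{0..n}. emeasure (distr (M \<Otimes>\<^sub>M unif 0 1) borel
            (\<lambda>(a, v). H a (randomized_rank (Y a) n j v))) T)
       = (real n + 1) * emeasure (distr (M \<Otimes>\<^sub>M unif 0 1) borel (\<lambda>(a, v). H a v)) T"
proof -
  let ?U = "unif 0 (1::real)"
  interpret U: prob_space ?U
    by (rule prob_space_unif) simp
  interpret M: sigma_finite_measure M
    by fact
  interpret pair_sigma_finite M ?U ..
  have H_rank[measurable]: "(\<lambda>(a, v). H a (randomized_rank (Y a) n j v)) \<in> borel_measurable (M \<Otimes>\<^sub>M ?U)"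
    for j
    by (rule measurable_compose_randomized_rank[OF H Y])
  have H_section: "{v. H a v \<in> T} \<in> sets borel" if "a \<in> space M" for a
    using measurable_sets[OF measurable_Pair2[OF H that] T] by (simp add: vimage_def)
  have "(\<Sum>j\<in>{0..n}. emeasure (distr (M \<Otimes>\<^sub>M ?U) borel
            (\<lambda>(a, v). H a (randomized_rank (Y a) n j v))) T)
      = (\<integral>\<^sup>+a. (\<Sum>j\<in>{0..n}. emeasure ?U {v. randomized_rank (Y a) n j v \<in> {v. H a v \<in> T}}) \<partial>M)"
    using T by (simp add: U.emeasure_distr_pair_measure nn_integral_sum[symmetric] measurable_emeasure_Pair)
  also have "\<dots> = (\<integral>\<^sup>+a. (real n + 1) * emeasure ?U {v. H a v \<in> T} \<partial>M)"
    using H_section by (intro nn_integral_cong sum_emeasure_randomized_rank)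
  also have "\<dots> = (real n + 1) * emeasure (distr (M \<Otimes>\<^sub>M ?U) borel (\<lambda>(a, v). H a v)) T"
    using T by (simp add: U.emeasure_distr_pair_measure nn_integral_cmult)
  finally show ?thesis .
qed

section \<open>Empirical distribution functions\<close>

lemma bij_betw_transpose_0:
  fixes j n :: nat
  shows "j \<le> n \<Longrightarrow> bij_betw (Transposition.transpose 0 j) {1..n} ({0..n} - {j})"
proof (rule bij_betw_imageI)
  show "inj_on (Transposition.transpose 0 j) {1..n}"
    using inj_transpose by (rule inj_on_subset) simp
  assume "j \<le> n"
  then show "Transposition.transpose 0 j ` {1..n} = {0..n} - {j}"
    by (auto simp: Transposition.transpose_def image_iff intro: bexI[of _ j])
qed

lemma F1hat_transpose_eq_randomized_rank:
  assumes "j \<le> n"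
  shows "F1hat n (\<lambda>i. Y (Transposition.transpose 0 j i)) u (Y j) = randomized_rank Y n j u"
proof -
  have sum_transpose: "(\<Sum>i\<in>{1..n}. g (Transposition.transpose 0 j i)) + g j = (\<Sum>k\<in>{0..n}. g k)"
    for g :: "nat \<Rightarrow> real"
    using sum.reindex_bij_betw[OF bij_betw_transpose_0[OF assms], of g] sum.remove[of "{0..n}" j g] assms
    by simp
  have less: "(\<Sum>i\<in>{1..n}. if Y (Transposition.transpose 0 j i) < Y j then 1 else 0)
      = real (card {i\<in>{0..n}. Y i < Y j})"
    using sum_transpose[of "\<lambda>k. if Y k < Y j then 1 else 0"] by (simp add: sum_indicator_eq_card)
  have equal: "1 + (\<Sum>i\<in>{1..n}. if Y (Transposition.transpose 0 j i) = Y j then 1 else 0)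
      = real (card {i\<in>{0..n}. Y i = Y j})"
    using sum_transpose[of "\<lambda>k. if Y k = Y j then 1 else 0"] by (simp add: sum_indicator_eq_card)
  show ?thesis
    unfolding F1hat_def randomized_rank_def less equal ..
qed

lemma F1hat_cong: "(\<And>i. i \<in> {1..n} \<Longrightarrow> ft i = ft' i) \<Longrightarrow> F1hat n ft u t = F1hat n ft' u t"
  unfolding F1hat_def by (intro arg_cong2[where f="(/)"] arg_cong2[where f="(+)"] sum.cong) auto

lemma F2hat_cong: "(\<And>i. i \<in> {n+1..2*n} \<Longrightarrow> ft i = ft' i) \<Longrightarrow> F2hat n ft = F2hat n ft'"
  unfolding F2hat_def by (intro ext arg_cong2[where f="(/)"] sum.cong) auto

lemma F2hat_mono: "a \<le> b \<Longrightarrow> F2hat n ft a \<le> F2hat n ft b"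
  unfolding F2hat_def by (auto intro!: divide_right_mono sum_mono)

lemma F2hat_nonneg: "0 \<le> F2hat n ft x"
  unfolding F2hat_def by (auto intro!: divide_nonneg_nonneg sum_nonneg)

lemma F2hat_le_1: "F2hat n ft x \<le> 1"
proof -
  have "(\<Sum>i\<in>{n+1..2*n}. if ft i \<le> x then 1 else 0) \<le> (\<Sum>i\<in>{n+1..2*n}. 1::real)"
    by (rule sum_mono) simp
  then show ?thesis
    unfolding F2hat_def by (cases "n = 0") simp_all
qed

lemma F2hat_Max_below:
  assumes "{d \<in> ft ` {n+1..2*n}. d \<le> x} \<noteq> {}"
  shows "F2hat n ft (Max {d \<in> ft ` {n+1..2*n}. d \<le> x}) = F2hat n ft x"
proof -
  let ?S = "{d \<in> ft ` {n+1..2*n}. d \<le> x}"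
  have "finite ?S"
    by simp
  have "ft i \<le> Max ?S \<longleftrightarrow> ft i \<le> x" if "i \<in> {n+1..2*n}" for i
  proof
    show "ft i \<le> x" if "ft i \<le> Max ?S"
      using that Max_in[OF \<open>finite ?S\<close> assms] by auto
    show "ft i \<le> Max ?S" if "ft i \<le> x"
      using that \<open>i \<in> {n+1..2*n}\<close> \<open>finite ?S\<close> by simp
  qed
  then show ?thesis
    unfolding F2hat_def by (intro arg_cong2[where f="(/)"] sum.cong) auto
qed

lemma F2hat_eq_0: "{d \<in> ft ` {n+1..2*n}. d \<le> x} = {} \<Longrightarrow> F2hat n ft x = 0"
  unfolding F2hat_def by (auto intro!: sum.neutral)

lemma F2hat_Max_eq_1:
  assumes "n \<ge> 1"
  shows "F2hat n ft (Max (ft ` {n+1..2*n})) = 1"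
proof -
  have "(\<Sum>i\<in>{n+1..2*n}. if ft i \<le> Max (ft ` {n+1..2*n}) then 1 else 0) = (\<Sum>i\<in>{n+1..2*n}. 1::real)"
    by (intro sum.cong refl) simp
  then show ?thesis
    unfolding F2hat_def using assms by simp
qed

text \<open>The level sets \<open>{x. u \<le> F2hat n ft x}\<close> are closed half-lines starting at a sample point,
  so the generalized inverse is attained.\<close>
lemma geninv_F2hat_le_iff:
  assumes "n \<ge> 1" "0 < u" "u \<le> 1"
  shows "geninv (F2hat n ft) u \<le> c \<longleftrightarrow> u \<le> F2hat n ft c"
proof -
  let ?F = "F2hat n ft"
  let ?D = "ft ` {n+1..2*n}"
  define Du where "Du = {d \<in> ?D. u \<le> ?F d}"
  have "Max ?D \<in> Du"
    using assms F2hat_Max_eq_1[OF assms(1)] by (simp add: Du_def)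
  then have "finite Du" "Du \<noteq> {}"
    by (auto simp: Du_def)
  have level_set: "u \<le> ?F x \<longleftrightarrow> Min Du \<le> x" for x
  proof
    assume "Min Du \<le> x"
    have "u \<le> ?F (Min Du)"
      using Min_in[OF \<open>finite Du\<close> \<open>Du \<noteq> {}\<close>] by (simp add: Du_def)
    also have "\<dots> \<le> ?F x"
      using \<open>Min Du \<le> x\<close> by (rule F2hat_mono)
    finally show "u \<le> ?F x" .
  next
    assume "u \<le> ?F x"
    with assms(2) have nonempty: "{d \<in> ?D. d \<le> x} \<noteq> {}"
      using F2hat_eq_0[of ft n x] by force
    with F2hat_Max_below \<open>u \<le> ?F x\<close> have "Max {d \<in> ?D. d \<le> x} \<in> Du"
      using Max_in[of "{d \<in> ?D. d \<le> x}"] by (auto simp: Du_def)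
    then have "Min Du \<le> Max {d \<in> ?D. d \<le> x}"
      using \<open>finite Du\<close> by simp
    also have "\<dots> \<le> x"
      using Max_in[OF _ nonempty] by auto
    finally show "Min Du \<le> x" .
  qed
  then have "geninv ?F u = Min Du"
    unfolding geninv_def by (simp add: cInf_atLeast flip: atLeast_def)
  then show ?thesis
    using level_set by simp
qed

text \<open>Outside \<open>(0, 1]\<close> the generalized inverse is an infimum over \<open>UNIV\<close> or \<open>{}\<close>, whose values
  are unspecified but fixed.\<close>
lemma geninv_F2hat_le_iff_cases:
  assumes "n \<ge> 1"
  shows "geninv (F2hat n ft) v \<le> c \<longleftrightarrow>
      (v \<le> 0 \<and> Inf (UNIV::real set) \<le> c) \<or> (1 < v \<and> Inf ({}::real set) \<le> c)
      \<or> (0 < v \<and> v \<le> 1 \<and> v \<le> F2hat n ft c)"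
proof -
  consider "v \<le> 0" | "0 < v" "v \<le> 1" | "1 < v"
    by linarith
  then show ?thesis
  proof cases
    case 1
    then have "{x. v \<le> F2hat n ft x} = UNIV"
      using F2hat_nonneg[of n ft] by (auto intro: order_trans)
    then show ?thesis
      using 1 by (simp add: geninv_def)
  next
    case 2
    then show ?thesis
      using geninv_F2hat_le_iff[OF assms] by simp
  next
    case 3
    then have "{x. v \<le> F2hat n ft x} = {}"
      using F2hat_le_1[of n ft] by (auto simp: not_le intro: le_less_trans)
    then show ?thesis
      using 3 by (simp add: geninv_def)
  qed
qed

lemma F1hat_measurable [measurable]:
  assumes [measurable]: "\<And>i. (\<lambda>x. g x i) \<in> borel_measurable M"
    "t \<in> borel_measurable M" "u \<in> borel_measurable M"
  shows "(\<lambda>x. F1hat n (g x) (u x) (t x)) \<in> borel_measurable M"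
  unfolding F1hat_def by measurable

lemma F2hat_measurable [measurable]:
  assumes [measurable]: "\<And>i. (\<lambda>x. g x i) \<in> borel_measurable M" "t \<in> borel_measurable M"
  shows "(\<lambda>x. F2hat n (g x) (t x)) \<in> borel_measurable M"
  unfolding F2hat_def by measurable

lemma geninv_F2hat_measurable [measurable]:
  assumes [measurable]: "\<And>i. (\<lambda>x. g x i) \<in> borel_measurable M" "h \<in> borel_measurable M"
  shows "(\<lambda>x. geninv (F2hat n (g x)) (h x)) \<in> borel_measurable M"
proof (cases "n = 0")
  case True
  then show ?thesis
    by (simp add: geninv_def F2hat_def)
next
  case False
  have "{x \<in> space M. geninv (F2hat n (g x)) (h x) \<le> c} =
      {x \<in> space M. (h x \<le> 0 \<and> Inf (UNIV::real set) \<le> c) \<or> (1 < h x \<and> Inf ({}::real set) \<le> c)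
          \<or> (0 < h x \<and> h x \<le> 1 \<and> h x \<le> F2hat n (g x) c)}" for c
    using False by (simp add: geninv_F2hat_le_iff_cases)
  also have "\<dots> c \<in> sets M" for c
    by measurable
  finally show ?thesis
    by (subst borel_measurable_iff_le) blast
qed

section \<open>Product measures\<close>

lemma measurable_component_PiM_borel:
  fixes M :: "'i \<Rightarrow> 'a::topological_space measure"
  assumes "\<And>q. q \<in> I \<Longrightarrow> sets (M q) = sets borel"
  shows "(\<lambda>x. x p) \<in> borel_measurable (PiM I M)"
proof (cases "p \<in> I")
  case True
  then show ?thesis
    using measurable_component_singleton[OF True, of M] by (simp add: measurable_cong_sets[OF refl assms])
next
  case False
  have "(\<lambda>x. x p) \<in> borel_measurable (PiM I M) \<longleftrightarrow> (\<lambda>x. undefined :: 'a) \<in> borel_measurable (PiM I M)"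
    by (rule measurable_cong) (use False in \<open>auto simp: space_PiM PiE_def extensional_def\<close>)
  then show ?thesis
    by simp
qed

lemma measurable_component_unif [measurable]: "(\<lambda>\<eta>. \<eta> p) \<in> borel_measurable (PiM I (\<lambda>_. unif a b))"
  by (rule measurable_component_PiM_borel) simp

lemma distr_PiM_restrict:
  assumes "\<And>i. i \<in> I \<Longrightarrow> prob_space (M i)" "J \<subseteq> I"
  shows "distr (PiM I M) (PiM J M) (\<lambda>\<omega>. restrict \<omega> J) = PiM J M"
proof -
  have "id \<in> J \<rightarrow> I"
    using assms(2) by auto
  then show ?thesis
    using distr_PiM_reindex[of I M id J] assms(1) by (simp add: restrict_def)
qed

definition transpose_coords :: "'i set \<Rightarrow> 'i \<Rightarrow> 'i \<Rightarrow> ('i \<Rightarrow> 'a) \<Rightarrow> 'i \<Rightarrow> 'a" where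
  "transpose_coords I a b \<omega> = (\<lambda>i\<in>I. \<omega> (Transposition.transpose a b i))"

lemma distr_PiM_transpose:
  assumes "\<And>i. i \<in> I \<Longrightarrow> prob_space (M i)" "a \<in> I" "b \<in> I" "M a = M b"
  shows "distr (PiM I M) (PiM I M) (transpose_coords I a b) = PiM I M"
proof -
  have "(\<lambda>i. M (Transposition.transpose a b i)) = M"
    using assms(4) by (auto simp: Transposition.transpose_def)
  moreover have "Transposition.transpose a b \<in> I \<rightarrow> I"
    using assms(2,3) by (auto simp: Transposition.transpose_def)
  ultimately show ?thesis
    using distr_PiM_reindex[of I M "Transposition.transpose a b" I] assms(1)
    by (simp add: transpose_coords_def[abs_def])
qed

lemma measurable_PiM_transpose:
  assumes "a \<in> I" "b \<in> I" "M a = M b"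
  shows "transpose_coords I a b \<in> measurable (PiM I M) (PiM I M)"
  unfolding transpose_coords_def[abs_def]
proof (rule measurable_restrict)
  fix i assume "i \<in> I"
  with assms have "Transposition.transpose a b i \<in> I" "M (Transposition.transpose a b i) = M i"
    by (auto simp: Transposition.transpose_def)
  then show "(\<lambda>\<omega>. \<omega> (Transposition.transpose a b i)) \<in> measurable (PiM I M) (M i)"
    using measurable_component_singleton[of "Transposition.transpose a b i" I M] by simp
qed

lemma distr_pair_measure_eq:
  assumes "f \<in> measurable M M'" "g \<in> measurable N N'" "distr M M' f = M'" "distr N N' g = N'"
    "sigma_finite_measure N'"
  shows "distr (M \<Otimes>\<^sub>M N) (M' \<Otimes>\<^sub>M N') (\<lambda>(x, y). (f x, g y)) = M' \<Otimes>\<^sub>M N'"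
  using pair_measure_distr[OF assms(1,2)] assms(3-) by simp

lemma uniform_measure_pair_Times:
  assumes "finite_measure M" "prob_space N" "A \<in> sets M" "emeasure M A \<noteq> 0"
  shows "uniform_measure (M \<Otimes>\<^sub>M N) (A \<times> space N) = uniform_measure M A \<Otimes>\<^sub>M N"
proof (rule pair_measure_eqI[symmetric])
  interpret M: finite_measure M by fact
  interpret N: prob_space N by fact
  show "sigma_finite_measure (uniform_measure M A)"
    using assms(4) by (intro prob_space_imp_sigma_finite prob_space_uniform_measure) simp_all
  show "sigma_finite_measure N"
    by unfold_locales
  fix B C assume "B \<in> sets (uniform_measure M A)" "C \<in> sets N"
  then show "emeasure (uniform_measure M A) B * emeasure N C =
      emeasure (uniform_measure (M \<Otimes>\<^sub>M N) (A \<times> space N)) (B \<times> C)"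
    using assms(3) sets.sets_into_space[of C N]
    by (simp add: N.emeasure_pair_measure_Times Times_Int_Times Int_absorb1 ennreal_times_divide
        N.emeasure_space_1 mult.commute)
qed simp

lemma nn_integral_PiM_insert:
  assumes M: "\<And>j. j \<in> insert i I \<Longrightarrow> prob_space (M j)"
    and g[measurable]: "g \<in> borel_measurable (PiM (insert i I) M)"
  shows "(\<integral>\<^sup>+y. g y \<partial>PiM (insert i I) M) = (\<integral>\<^sup>+x. (\<integral>\<^sup>+y. g (y(i := x)) \<partial>PiM I M) \<partial>(M i))"
proof -
  interpret I: prob_space "PiM I M"
    using M by (intro prob_space_PiM) auto
  have upd[measurable]: "(\<lambda>(x, y). y(i := x)) \<in> measurable (M i \<Otimes>\<^sub>M PiM I M) (PiM (insert i I) M)"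
    unfolding case_prod_unfold by (rule measurable_fun_upd[where J=I]) auto
  have "(\<integral>\<^sup>+y. g y \<partial>PiM (insert i I) M)
      = (\<integral>\<^sup>+y. g y \<partial>distr (M i \<Otimes>\<^sub>M PiM I M) (PiM (insert i I) M) (\<lambda>(x, y). y(i := x)))"
    using M by (simp add: distr_pair_PiM_eq_PiM)
  also have "\<dots> = (\<integral>\<^sup>+m. g ((\<lambda>(x, y). y(i := x)) m) \<partial>(M i \<Otimes>\<^sub>M PiM I M))"
    by (rule nn_integral_distr) measurable
  also have "\<dots> = (\<integral>\<^sup>+x. (\<integral>\<^sup>+y. g (y(i := x)) \<partial>PiM I M) \<partial>(M i))"
    using measurable_compose[OF upd g] by (subst I.nn_integral_fst[symmetric]) (simp_all add: comp_def)
  finally show ?thesis .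
qed

lemma measurable_fun_upd_insert [measurable]:
  "f \<in> measurable N (PiM I M) \<Longrightarrow> h \<in> measurable N (M i) \<Longrightarrow>
    (\<lambda>x. (f x)(i := h x)) \<in> measurable N (PiM (insert i I) M)"
  by (rule measurable_fun_upd) auto

lemma nn_integral_pair_measure_iterated:
  assumes "prob_space B" "prob_space C" "prob_space D" "prob_space E"
    and h: "h \<in> borel_measurable (A \<Otimes>\<^sub>M (B \<Otimes>\<^sub>M (C \<Otimes>\<^sub>M (D \<Otimes>\<^sub>M E))))"
  shows "(\<integral>\<^sup>+m. h m \<partial>(A \<Otimes>\<^sub>M (B \<Otimes>\<^sub>M (C \<Otimes>\<^sub>M (D \<Otimes>\<^sub>M E)))))
       = (\<integral>\<^sup>+a. \<integral>\<^sup>+b. \<integral>\<^sup>+c. \<integral>\<^sup>+d. \<integral>\<^sup>+e. h (a, b, c, d, e) \<partial>E \<partial>D \<partial>C \<partial>B \<partial>A)"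
proof -
  interpret E: prob_space E by fact
  interpret DE: prob_space "D \<Otimes>\<^sub>M E" by (intro prob_space_pair assms)
  interpret CDE: prob_space "C \<Otimes>\<^sub>M (D \<Otimes>\<^sub>M E)" by (intro prob_space_pair assms)
  interpret BCDE: prob_space "B \<Otimes>\<^sub>M (C \<Otimes>\<^sub>M (D \<Otimes>\<^sub>M E))" by (intro prob_space_pair assms)
  have h1: "(\<lambda>r. h (a, r)) \<in> borel_measurable (B \<Otimes>\<^sub>M (C \<Otimes>\<^sub>M (D \<Otimes>\<^sub>M E)))" if "a \<in> space A" for a
    using h that by (rule measurable_Pair2)
  have h2: "(\<lambda>r. h (a, b, r)) \<in> borel_measurable (C \<Otimes>\<^sub>M (D \<Otimes>\<^sub>M E))" if "a \<in> space A" "b \<in> space B" for a b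
    using measurable_Pair2[OF h1[OF that(1)] that(2)] by simp
  have h3: "(\<lambda>r. h (a, b, c, r)) \<in> borel_measurable (D \<Otimes>\<^sub>M E)"
    if "a \<in> space A" "b \<in> space B" "c \<in> space C" for a b c
    using measurable_Pair2[OF h2[OF that(1,2)] that(3)] by simp
  show ?thesis
    by (simp add: h h1 h2 h3 BCDE.nn_integral_fst[symmetric] CDE.nn_integral_fst[symmetric]
        DE.nn_integral_fst[symmetric] E.nn_integral_fst[symmetric] cong: nn_integral_cong)
qed

section \<open>The randomized predictor\<close>

lemma sets_lawX_given_S [simp, measurable_cong]: "sets (lawX_given_S P s) = sets borel"
  by (simp add: lawX_given_S_def cond_law_def)

definition insert_test_point ::
  "nat \<Rightarrow> 'x \<times> (nat \<times> nat \<Rightarrow> 'x) \<times> real \<times> (nat \<times> nat \<Rightarrow> real) \<times> 'u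
    \<Rightarrow> ((nat \<times> nat \<Rightarrow> 'x) \<times> (nat \<times> nat \<Rightarrow> real)) \<times> 'u" where
  "insert_test_point s = (\<lambda>(x, xs, \<zeta>, \<zeta>s, u). ((xs((s, 0) := x), \<zeta>s((s, 0) := \<zeta>)), u))"

locale fair_predictor_setting =
  fixes P :: "('x::topological_space \<times> nat \<times> real) measure"
    and f :: "'x \<Rightarrow> nat \<Rightarrow> real" and K :: nat and N :: "nat \<Rightarrow> nat" and w :: "nat \<Rightarrow> real"
    and \<sigma> :: real
  assumes prob_space_P: "prob_space P"
    and sets_P: "sets P = sets (borel \<Otimes>\<^sub>M count_space UNIV \<Otimes>\<^sub>M borel)"
    and group_prob_pos: "\<And>s. s \<in> {1..K} \<Longrightarrow> measure P {z \<in> space P. Sof z = s} > 0"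
    and f_measurable: "(\<lambda>(x, s). f x s) \<in> borel_measurable (borel \<Otimes>\<^sub>M count_space UNIV)"
    and \<sigma>_pos: "\<sigma> > 0"
begin

abbreviation noise :: "real measure" where
  "noise \<equiv> unif (-\<sigma>) \<sigma>"

abbreviation tiebreak :: "(nat \<Rightarrow> real) measure" where
  "tiebreak \<equiv> PiM {1..K} (\<lambda>_. unif 0 1)"

abbreviation samples :: "(nat \<times> nat) set \<Rightarrow> ((nat \<times> nat \<Rightarrow> 'x) \<times> (nat \<times> nat \<Rightarrow> real)) measure" where
  "samples I \<equiv> PiM I (\<lambda>p. lawX_given_S P (fst p)) \<Otimes>\<^sub>M PiM I (\<lambda>_. noise)"

abbreviation aux ::
  "((nat \<times> nat \<Rightarrow> 'x) \<times> real \<times> (nat \<times> nat \<Rightarrow> real) \<times> (nat \<Rightarrow> real)) measure" where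
  "aux \<equiv> PiM (samp_idx K N) (\<lambda>p. lawX_given_S P (fst p))
     \<Otimes>\<^sub>M (noise \<Otimes>\<^sub>M (PiM (samp_idx K N) (\<lambda>_. noise) \<Otimes>\<^sub>M tiebreak))"

text \<open>Sample indices start at \<open>1\<close>, so the test point of group \<open>s\<close> can be stored as the extra
  sample \<open>(s, 0)\<close>; together with the samples \<open>1..N s\<close> it gives \<open>N s + 1\<close> exchangeable scores.\<close>
definition pooled_idx :: "nat \<Rightarrow> (nat \<times> nat) set" where
  "pooled_idx s = insert (s, 0) (samp_idx K N)"

definition quantile_idx :: "(nat \<times> nat) set" where
  "quantile_idx = {(s, i). s \<in> {1..K} \<and> i \<in> {N s + 1..2 * N s}}"

definition noisy_score :: "nat \<Rightarrow> (nat \<times> nat \<Rightarrow> 'x) \<Rightarrow> (nat \<times> nat \<Rightarrow> real) \<Rightarrow> nat \<Rightarrow> real" where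
  "noisy_score s \<omega> \<eta> i = f (\<omega> (s, i)) s + \<eta> (s, i)"

definition quantile_barycenter :: "(nat \<times> nat \<Rightarrow> 'x) \<Rightarrow> (nat \<times> nat \<Rightarrow> real) \<Rightarrow> real \<Rightarrow> real" where
  "quantile_barycenter \<omega> \<eta> v = (\<Sum>s'\<in>{1..K}. w s' * geninv (F2hat (N s') (noisy_score s' \<omega> \<eta>)) v)"

definition predictor ::
  "nat \<Rightarrow> 'x \<Rightarrow> real \<Rightarrow> (nat \<times> nat \<Rightarrow> 'x) \<Rightarrow> (nat \<times> nat \<Rightarrow> real) \<Rightarrow> (nat \<Rightarrow> real) \<Rightarrow> real" where
  "predictor s x \<zeta> \<omega> \<eta> u = quantile_barycenter \<omega> \<eta> (F1hat (N s) (noisy_score s \<omega> \<eta>) (u s) (f x s + \<zeta>))"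

lemma Pihat_eq_predictor: "Pihat f w K N (z, xs, \<zeta>, \<zeta>s, u) = predictor (Sof z) (fst z) \<zeta> xs \<zeta>s u"
  by (simp add: Pihat_def predictor_def quantile_barycenter_def noisy_score_def[abs_def] Let_def)

lemma f_section_measurable [measurable]: "(\<lambda>x. f x s) \<in> borel_measurable borel"
proof -
  have "(\<lambda>x. (x, s)) \<in> measurable borel (borel \<Otimes>\<^sub>M count_space UNIV)"
    by measurable
  from measurable_compose[OF this f_measurable] show ?thesis
    by simp
qed

lemma measurable_component_lawX [measurable]:
  "(\<lambda>\<omega>. \<omega> p) \<in> borel_measurable (PiM I (\<lambda>p. lawX_given_S P (fst p)))"
  by (rule measurable_component_PiM_borel) simp

lemma noisy_score_measurable [measurable]:
  assumes [measurable]: "\<And>p. (\<lambda>m. X m p) \<in> borel_measurable M" "\<And>p. (\<lambda>m. Z m p) \<in> borel_measurable M"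
  shows "(\<lambda>m. noisy_score s (X m) (Z m) i) \<in> borel_measurable M"
  unfolding noisy_score_def by measurable

lemma quantile_barycenter_measurable [measurable]:
  assumes [measurable]: "\<And>p. (\<lambda>m. X m p) \<in> borel_measurable M" "\<And>p. (\<lambda>m. Z m p) \<in> borel_measurable M"
    "V \<in> borel_measurable M"
  shows "(\<lambda>m. quantile_barycenter (X m) (Z m) (V m)) \<in> borel_measurable M"
  unfolding quantile_barycenter_def by measurable

lemma predictor_measurable [measurable]:
  assumes [measurable]: "\<And>p. (\<lambda>m. X m p) \<in> borel_measurable M" "\<And>p. (\<lambda>m. Z m p) \<in> borel_measurable M"
    "\<And>k. (\<lambda>m. U m k) \<in> borel_measurable M" "x \<in> borel_measurable M" "\<zeta> \<in> borel_measurable M"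
  shows "(\<lambda>m. predictor s (x m) (\<zeta> m) (X m) (Z m) (U m)) \<in> borel_measurable M"
  unfolding predictor_def by measurable

interpretation P: prob_space P
  by (rule prob_space_P)

lemma Sof_measurable [measurable]: "Sof \<in> measurable P (count_space UNIV)"
  unfolding Sof_def[abs_def] measurable_cong_sets[OF sets_P refl] by measurable

lemma fst_measurable_P [measurable]: "fst \<in> borel_measurable P"
  unfolding measurable_cong_sets[OF sets_P refl] by measurable

lemma emeasure_group_nonzero: "s \<in> {1..K} \<Longrightarrow> emeasure P {z \<in> space P. Sof z = s} \<noteq> 0"
  using group_prob_pos[of s] by (simp add: P.emeasure_eq_measure)

lemma prob_space_lawX_given_S: "s \<in> {1..K} \<Longrightarrow> prob_space (lawX_given_S P s)"
  unfolding lawX_given_S_def cond_law_def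
  by (intro prob_space.prob_space_distr prob_space_uniform_measure emeasure_group_nonzero) simp_all

lemma prob_space_noise: "prob_space noise"
  using \<sigma>_pos by (intro prob_space_unif) simp

lemma prob_space_tiebreak: "prob_space tiebreak"
  by (intro prob_space_PiM prob_space_unif) simp

lemma prob_space_samples:
  "(\<And>p. p \<in> I \<Longrightarrow> fst p \<in> {1..K}) \<Longrightarrow> prob_space (samples I)"
  by (intro prob_space_pair prob_space_PiM prob_space_lawX_given_S prob_space_noise)

lemma prob_space_aux: "prob_space aux"
  by (intro prob_space_pair prob_space_PiM prob_space_lawX_given_S prob_space_noise prob_space_tiebreak)
     (auto simp: samp_idx_def)

lemma Omega_eq: "Omega P K N \<sigma> = P \<Otimes>\<^sub>M aux"
  by (simp add: Omega_def case_prod_unfold)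

lemma Pihat_eq_predictor_fst_snd:
  "Pihat f w K N = (\<lambda>m. predictor (Sof (fst m)) (fst (fst m)) (fst (snd (snd m))) (fst (snd m))
      (fst (snd (snd (snd m)))) (snd (snd (snd (snd m)))))"
  by (rule ext) (metis Pihat_eq_predictor prod.collapse)

lemma Pihat_measurable: "Pihat f w K N \<in> borel_measurable (P \<Otimes>\<^sub>M aux)"
proof -
  have "(\<lambda>m. predictor s (fst (fst m)) (fst (snd (snd m))) (fst (snd m)) (fst (snd (snd (snd m))))
      (snd (snd (snd (snd m))))) \<in> borel_measurable (P \<Otimes>\<^sub>M aux)" for s
    by measurable
  then have "(\<lambda>m. predictor (Sof (fst m)) (fst (fst m)) (fst (snd (snd m))) (fst (snd m))
      (fst (snd (snd (snd m)))) (snd (snd (snd (snd m))))) \<in> borel_measurable (P \<Otimes>\<^sub>M aux)"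
    by (rule measurable_compose_countable) measurable
  then show ?thesis
    unfolding Pihat_eq_predictor_fst_snd .
qed

lemma cond_law_eq_distr_lawX:
  assumes "s \<in> {1..K}"
  shows "cond_law (Omega P K N \<sigma>) {\<omega> \<in> space (Omega P K N \<sigma>). Sof (fst \<omega>) = s} (Pihat f w K N)
       = distr (lawX_given_S P s \<Otimes>\<^sub>M aux) borel (\<lambda>(x, xs, \<zeta>, \<zeta>s, u). predictor s x \<zeta> xs \<zeta>s u)"
proof -
  interpret aux: prob_space aux
    by (rule prob_space_aux)
  define E where "E = {z \<in> space P. Sof z = s}"
  have E: "E \<in> sets P"
    unfolding E_def by measurable
  have "emeasure P E \<noteq> 0"
    unfolding E_def using assms by (rule emeasure_group_nonzero)
  have event: "{\<omega> \<in> space (P \<Otimes>\<^sub>M aux). Sof (fst \<omega>) = s} = E \<times> space aux"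
    by (auto simp: E_def space_pair_measure)
  have "AE z in uniform_measure P E. Sof z = s"
    using E by (intro AE_uniform_measureI) (auto simp: E_def)
  then have "AE m in distr (uniform_measure P E \<Otimes>\<^sub>M aux) (uniform_measure P E) fst. Sof m = s"
    by (simp only: aux.distr_pair_fst)
  then have "AE m in uniform_measure P E \<Otimes>\<^sub>M aux. Sof (fst m) = s"
    by (rule AE_distrD[rotated]) simp
  then have "distr (uniform_measure P E \<Otimes>\<^sub>M aux) borel (Pihat f w K N)
      = distr (uniform_measure P E \<Otimes>\<^sub>M aux) borel
          ((\<lambda>(x, xs, \<zeta>, \<zeta>s, u). predictor s x \<zeta> xs \<zeta>s u) \<circ> (\<lambda>(z, r). (fst z, r)))"
    using Pihat_measurable
    by (intro distr_cong_AE) (auto simp: Pihat_eq_predictor_fst_snd case_prod_unfold)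
  also have "\<dots> = distr (distr (uniform_measure P E \<Otimes>\<^sub>M aux) (borel \<Otimes>\<^sub>M aux) (\<lambda>(z, r). (fst z, r))) borel
      (\<lambda>(x, xs, \<zeta>, \<zeta>s, u). predictor s x \<zeta> xs \<zeta>s u)"
    by (rule distr_distr[symmetric]) (unfold case_prod_unfold; measurable)+
  also have "distr (uniform_measure P E \<Otimes>\<^sub>M aux) (borel \<Otimes>\<^sub>M aux) (\<lambda>(z, r). (fst z, r))
      = lawX_given_S P s \<Otimes>\<^sub>M aux"
    using pair_measure_distr[of fst "uniform_measure P E" borel "\<lambda>r. r" aux aux]
      aux.sigma_finite_measure_axioms
    by (simp add: lawX_given_S_def cond_law_def E_def)
  finally show ?thesis
    unfolding cond_law_def Omega_eq event
      uniform_measure_pair_Times[OF P.finite_measure_axioms prob_space_aux E \<open>emeasure P E \<noteq> 0\<close>] .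
qed

lemma fst_pooled_idx: "s \<in> {1..K} \<Longrightarrow> p \<in> pooled_idx s \<Longrightarrow> fst p \<in> {1..K}"
  by (auto simp: pooled_idx_def samp_idx_def)

lemma noisy_score_fun_upd:
  "i \<noteq> 0 \<Longrightarrow> noisy_score s' (xs((s, 0) := x)) (\<zeta>s((s, 0) := \<zeta>)) i = noisy_score s' xs \<zeta>s i"
  by (simp add: noisy_score_def)

lemma predictor_fun_upd:
  "predictor s x \<zeta> (xs((s, 0) := x')) (\<zeta>s((s, 0) := \<zeta>')) u = predictor s x \<zeta> xs \<zeta>s u"
  unfolding predictor_def quantile_barycenter_def
  by (intro sum.cong refl arg_cong2[where f="(*)"] arg_cong2[where f=geninv] F2hat_cong F1hat_cong)
     (simp_all add: noisy_score_fun_upd)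

lemma measurable_fun_upd_pooled [measurable]:
  "F \<in> measurable M (PiM (samp_idx K N) L) \<Longrightarrow> H \<in> measurable M (L (s, 0)) \<Longrightarrow>
    (\<lambda>x. (F x)((s, 0) := H x)) \<in> measurable M (PiM (pooled_idx s) L)"
  unfolding pooled_idx_def by (rule measurable_fun_upd_insert)

lemma fun_upd_in_space_pooled:
  "xs \<in> space (PiM (samp_idx K N) L) \<Longrightarrow> x \<in> space (L (s, 0)) \<Longrightarrow>
    xs((s, 0) := x) \<in> space (PiM (pooled_idx s) L)"
  unfolding pooled_idx_def
  by (rule measurable_space[OF measurable_component_update]) (simp_all add: samp_idx_def)

lemma nn_integral_PiM_pooled:
  assumes "\<And>p. p \<in> pooled_idx s \<Longrightarrow> prob_space (L p)" "F \<in> borel_measurable (PiM (pooled_idx s) L)"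
  shows "(\<integral>\<^sup>+y. F y \<partial>PiM (pooled_idx s) L) = (\<integral>\<^sup>+x. \<integral>\<^sup>+y. F (y((s, 0) := x)) \<partial>PiM (samp_idx K N) L \<partial>L (s, 0))"
  using assms unfolding pooled_idx_def by (rule nn_integral_PiM_insert)

lemma nn_integral_pooled_samples:
  assumes s: "s \<in> {1..K}" and g[measurable]: "g \<in> borel_measurable (samples (pooled_idx s) \<Otimes>\<^sub>M tiebreak)"
  shows "(\<integral>\<^sup>+m. g m \<partial>(samples (pooled_idx s) \<Otimes>\<^sub>M tiebreak))
       = (\<integral>\<^sup>+m. g (insert_test_point s m) \<partial>(lawX_given_S P s \<Otimes>\<^sub>M aux))"
proof -
  let ?X = "PiM (samp_idx K N) (\<lambda>p. lawX_given_S P (fst p))"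
  let ?Z = "PiM (samp_idx K N) (\<lambda>_. noise)"
  let ?Zpool = "PiM (pooled_idx s) (\<lambda>_. noise)"
  interpret T: prob_space tiebreak
    by (rule prob_space_tiebreak)
  interpret ZP: prob_space ?Zpool
    by (intro prob_space_PiM prob_space_noise)
  have X_prob: "prob_space (lawX_given_S P (fst p))" if "p \<in> pooled_idx s" for p
    using fst_pooled_idx[OF s that] by (rule prob_space_lawX_given_S)
  note insert_X = nn_integral_PiM_pooled[of s "\<lambda>p. lawX_given_S P (fst p)", OF X_prob, simplified]
  note insert_Z = nn_integral_PiM_pooled[of s "\<lambda>_. noise", OF prob_space_noise]
  have "(\<integral>\<^sup>+m. g m \<partial>(samples (pooled_idx s) \<Otimes>\<^sub>M tiebreak))
      = (\<integral>\<^sup>+a. \<integral>\<^sup>+u. g (a, u) \<partial>tiebreak \<partial>samples (pooled_idx s))"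
    by (rule T.nn_integral_fst[symmetric, OF g])
  also have "\<dots> = (\<integral>\<^sup>+xs. \<integral>\<^sup>+\<zeta>s. \<integral>\<^sup>+u. g ((xs, \<zeta>s), u)
      \<partial>tiebreak \<partial>?Zpool \<partial>PiM (pooled_idx s) (\<lambda>p. lawX_given_S P (fst p)))"
    by (rule ZP.nn_integral_fst[symmetric]) measurable
  also have "\<dots> = (\<integral>\<^sup>+x. \<integral>\<^sup>+xs. \<integral>\<^sup>+\<zeta>s. \<integral>\<^sup>+u. g ((xs((s, 0) := x), \<zeta>s), u)
      \<partial>tiebreak \<partial>?Zpool \<partial>?X \<partial>lawX_given_S P s)"
    by (rule insert_X) measurable
  also have "\<dots> = (\<integral>\<^sup>+x. \<integral>\<^sup>+xs. \<integral>\<^sup>+\<zeta>. \<integral>\<^sup>+\<zeta>s. \<integral>\<^sup>+u. g ((xs((s, 0) := x), \<zeta>s((s, 0) := \<zeta>)), u)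
      \<partial>tiebreak \<partial>?Z \<partial>noise \<partial>?X \<partial>lawX_given_S P s)"
  proof (intro nn_integral_cong insert_Z)
    fix x xs assume "x \<in> space (lawX_given_S P s)" "xs \<in> space ?X"
    then have "xs((s, 0) := x) \<in> space (PiM (pooled_idx s) (\<lambda>p. lawX_given_S P (fst p)))"
      by (intro fun_upd_in_space_pooled) simp_all
    then show "(\<lambda>\<zeta>s. \<integral>\<^sup>+u. g ((xs((s, 0) := x), \<zeta>s), u) \<partial>tiebreak) \<in> borel_measurable ?Zpool"
      by (intro measurable_Pair2[of "\<lambda>a. \<integral>\<^sup>+u. g (a, u) \<partial>tiebreak"]) measurable
  qed
  also have "\<dots> = (\<integral>\<^sup>+m. g (insert_test_point s m) \<partial>(lawX_given_S P s \<Otimes>\<^sub>M aux))"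
  proof -
    have G: "(\<lambda>m. g (insert_test_point s m)) \<in> borel_measurable (lawX_given_S P s \<Otimes>\<^sub>M aux)"
      unfolding insert_test_point_def case_prod_unfold by measurable
    have "prob_space ?X"
      by (intro prob_space_PiM prob_space_lawX_given_S) (auto simp: samp_idx_def)
    from nn_integral_pair_measure_iterated[OF this prob_space_noise _ T.prob_space_axioms G]
    show ?thesis
      by (simp add: prob_space_PiM prob_space_noise insert_test_point_def)
  qed
  finally show ?thesis .
qed

lemma measurable_insert_test_point:
  "insert_test_point s \<in> measurable (lawX_given_S P s \<Otimes>\<^sub>M aux) (samples (pooled_idx s) \<Otimes>\<^sub>M tiebreak)"
  unfolding insert_test_point_def case_prod_unfold by measurable

lemma distr_insert_test_point:
  assumes "s \<in> {1..K}"
  shows "distr (lawX_given_S P s \<Otimes>\<^sub>M aux) (samples (pooled_idx s) \<Otimes>\<^sub>M tiebreak)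
      (insert_test_point s)
    = samples (pooled_idx s) \<Otimes>\<^sub>M tiebreak"
proof (rule measure_eqI)
  let ?D = "distr (lawX_given_S P s \<Otimes>\<^sub>M aux) (samples (pooled_idx s) \<Otimes>\<^sub>M tiebreak) (insert_test_point s)"
  fix A assume A': "A \<in> sets ?D"
  then have A: "A \<in> sets (samples (pooled_idx s) \<Otimes>\<^sub>M tiebreak)"
    by (simp only: sets_distr)
  have "emeasure ?D A = (\<integral>\<^sup>+m. indicator A m \<partial>?D)"
    by (rule nn_integral_indicator[OF A', symmetric])
  also have "\<dots> = (\<integral>\<^sup>+m. indicator A (insert_test_point s m) \<partial>(lawX_given_S P s \<Otimes>\<^sub>M aux))"
    by (rule nn_integral_distr[OF measurable_insert_test_point borel_measurable_indicator[OF A']])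
  also have "\<dots> = emeasure (samples (pooled_idx s) \<Otimes>\<^sub>M tiebreak) A"
    using nn_integral_pooled_samples[OF assms borel_measurable_indicator[OF A]]
    by (simp only: nn_integral_indicator[OF A])
  finally show "emeasure ?D A = emeasure (samples (pooled_idx s) \<Otimes>\<^sub>M tiebreak) A" .
qed (rule sets_distr)

lemma distr_predictor_pooled:
  assumes "s \<in> {1..K}"
  shows "distr (lawX_given_S P s \<Otimes>\<^sub>M aux) borel (\<lambda>(x, xs, \<zeta>, \<zeta>s, u). predictor s x \<zeta> xs \<zeta>s u)
    = distr (samples (pooled_idx s) \<Otimes>\<^sub>M tiebreak) borel
        (\<lambda>((\<omega>, \<eta>), u). predictor s (\<omega> (s, 0)) (\<eta> (s, 0)) \<omega> \<eta> u)"
proof -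
  have pooled_measurable: "(\<lambda>((\<omega>, \<eta>), u). predictor s (\<omega> (s, 0)) (\<eta> (s, 0)) \<omega> \<eta> u)
      \<in> borel_measurable (samples (pooled_idx s) \<Otimes>\<^sub>M tiebreak)"
    unfolding case_prod_unfold by measurable
  have "distr (samples (pooled_idx s) \<Otimes>\<^sub>M tiebreak) borel
        (\<lambda>((\<omega>, \<eta>), u). predictor s (\<omega> (s, 0)) (\<eta> (s, 0)) \<omega> \<eta> u)
    = distr (lawX_given_S P s \<Otimes>\<^sub>M aux) borel
        ((\<lambda>((\<omega>, \<eta>), u). predictor s (\<omega> (s, 0)) (\<eta> (s, 0)) \<omega> \<eta> u)
          \<circ> (insert_test_point s))"
    by (subst (1) distr_insert_test_point[OF assms, symmetric])
       (rule distr_distr[OF pooled_measurable measurable_insert_test_point])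
  also have "\<dots> = distr (lawX_given_S P s \<Otimes>\<^sub>M aux) borel (\<lambda>(x, xs, \<zeta>, \<zeta>s, u). predictor s x \<zeta> xs \<zeta>s u)"
    by (rule distr_cong) (auto simp: insert_test_point_def predictor_fun_upd split: prod.split)
  finally show ?thesis ..
qed

lemma pooled_idx_memI: "s \<in> {1..K} \<Longrightarrow> i \<le> 2 * N s \<Longrightarrow> (s, i) \<in> pooled_idx s"
  by (cases "i = 0") (auto simp: pooled_idx_def samp_idx_def)

lemma quantile_idx_subset_pooled_idx: "quantile_idx \<subseteq> pooled_idx s"
  by (auto simp: quantile_idx_def pooled_idx_def samp_idx_def)

lemma noisy_score_transpose:
  assumes "s \<in> {1..K}" "j \<le> N s" "i \<le> 2 * N s"
  shows "noisy_score s (transpose_coords (pooled_idx s) (s, 0) (s, j) \<omega>)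
      (transpose_coords (pooled_idx s) (s, 0) (s, j) \<eta>) i
    = noisy_score s \<omega> \<eta> (Transposition.transpose 0 j i)"
proof -
  have "Transposition.transpose (s, 0) (s, j) (s, i) = (s, Transposition.transpose 0 j i)"
    by (auto simp: Transposition.transpose_def)
  then show ?thesis
    using pooled_idx_memI[OF assms(1)] assms(3) by (simp add: noisy_score_def transpose_coords_def)
qed

lemma quantile_barycenter_transpose:
  assumes "j \<le> N s"
  shows "quantile_barycenter (transpose_coords (pooled_idx s) (s, 0) (s, j) \<omega>)
      (transpose_coords (pooled_idx s) (s, 0) (s, j) \<eta>) = quantile_barycenter \<omega> \<eta>"
proof -
  have "noisy_score s' (transpose_coords (pooled_idx s) (s, 0) (s, j) \<omega>)
      (transpose_coords (pooled_idx s) (s, 0) (s, j) \<eta>) i = noisy_score s' \<omega> \<eta> i"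
    if "s' \<in> {1..K}" "i \<in> {N s' + 1..2 * N s'}" for s' i
  proof -
    have "(s', i) \<in> pooled_idx s"
      using that by (auto simp: pooled_idx_def samp_idx_def)
    moreover have "Transposition.transpose (s, 0) (s, j) (s', i) = (s', i)"
      using that assms by (auto simp: Transposition.transpose_def)
    ultimately show ?thesis
      by (simp add: noisy_score_def transpose_coords_def)
  qed
  then show ?thesis
    unfolding quantile_barycenter_def
    by (intro ext sum.cong refl arg_cong2[where f="(*)"] arg_cong2[where f=geninv] F2hat_cong) auto
qed

lemma predictor_transpose:
  fixes \<omega> :: "nat \<times> nat \<Rightarrow> 'x" and \<eta> :: "nat \<times> nat \<Rightarrow> real"
  assumes "s \<in> {1..K}" "j \<le> N s"
  defines "\<omega>' \<equiv> transpose_coords (pooled_idx s) (s, 0) (s, j) \<omega>"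
    and "\<eta>' \<equiv> transpose_coords (pooled_idx s) (s, 0) (s, j) \<eta>"
  shows "predictor s (\<omega>' (s, 0)) (\<eta>' (s, 0)) \<omega>' \<eta>' u
    = quantile_barycenter \<omega> \<eta> (randomized_rank (noisy_score s \<omega> \<eta>) (N s) j (u s))"
proof -
  let ?Y = "noisy_score s \<omega> \<eta>"
  have "f (\<omega>' (s, 0)) s + \<eta>' (s, 0) = ?Y j"
    using noisy_score_transpose[OF assms(1,2), of 0] unfolding \<omega>'_def \<eta>'_def noisy_score_def by simp
  moreover have "F1hat (N s) (noisy_score s \<omega>' \<eta>') (u s) (?Y j)
      = F1hat (N s) (\<lambda>i. ?Y (Transposition.transpose 0 j i)) (u s) (?Y j)"
    using noisy_score_transpose[OF assms(1,2)] unfolding \<omega>'_def \<eta>'_def by (intro F1hat_cong) simp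
  ultimately show ?thesis
    using quantile_barycenter_transpose[OF assms(2)]
    by (simp add: predictor_def \<omega>'_def \<eta>'_def F1hat_transpose_eq_randomized_rank[OF assms(2)])
qed

lemma sigma_finite_noise_PiM: "sigma_finite_measure (PiM I (\<lambda>_. noise))"
  by (intro prob_space_imp_sigma_finite prob_space_PiM prob_space_noise)

lemma distr_samples_transpose:
  assumes "s \<in> {1..K}" "j \<le> N s"
  shows "distr (samples (pooled_idx s)) (samples (pooled_idx s))
      (\<lambda>(\<omega>, \<eta>). (transpose_coords (pooled_idx s) (s, 0) (s, j) \<omega>,
        transpose_coords (pooled_idx s) (s, 0) (s, j) \<eta>))
    = samples (pooled_idx s)"
proof -
  have in_pooled: "(s, 0) \<in> pooled_idx s" "(s, j) \<in> pooled_idx s"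
    using assms by (auto intro: pooled_idx_memI)
  have prob: "prob_space (lawX_given_S P (fst p))" if "p \<in> pooled_idx s" for p
    using fst_pooled_idx[OF assms(1) that] by (rule prob_space_lawX_given_S)
  show ?thesis
    using in_pooled prob prob_space_noise
    by (intro distr_pair_measure_eq measurable_PiM_transpose distr_PiM_transpose sigma_finite_noise_PiM) auto
qed

lemma measurable_tiebreak_coordinate:
  assumes "s \<in> {1..K}"
  shows "(\<lambda>(a, u). (a, u s)) \<in> measurable (M \<Otimes>\<^sub>M tiebreak) (M \<Otimes>\<^sub>M unif 0 1)"
proof -
  have [measurable]: "(\<lambda>u. u s) \<in> measurable tiebreak (unif 0 1)"
    using assms by (intro measurable_component_singleton) auto
  show ?thesis
    unfolding case_prod_unfold by measurable
qed

lemma distr_tiebreak_coordinate: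
  assumes "s \<in> {1..K}" "sigma_finite_measure M"
  shows "distr (M \<Otimes>\<^sub>M tiebreak) (M \<Otimes>\<^sub>M unif 0 1) (\<lambda>(a, u). (a, u s)) = M \<Otimes>\<^sub>M unif 0 1"
proof -
  have component: "(\<lambda>u. u s) \<in> measurable tiebreak (unif 0 1)"
    using assms(1) by (intro measurable_component_singleton) auto
  have "distr tiebreak (unif 0 1) (\<lambda>u. u s) = unif 0 1"
    using assms(1) by (intro distr_PiM_component prob_space_unif) auto
  then show ?thesis
    by (rule distr_pair_measure_eq[OF measurable_ident_sets[OF refl] component distr_id])
       (simp add: prob_space_unif prob_space_imp_sigma_finite)
qed

lemma sigma_finite_samples_pooled: "s \<in> {1..K} \<Longrightarrow> sigma_finite_measure (samples (pooled_idx s))"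
  using fst_pooled_idx by (intro prob_space_imp_sigma_finite prob_space_samples)

lemma distr_predictor_eq_randomized_rank:
  assumes s: "s \<in> {1..K}" and j: "j \<le> N s"
  shows "distr (samples (pooled_idx s) \<Otimes>\<^sub>M tiebreak) borel
      (\<lambda>((\<omega>, \<eta>), u). predictor s (\<omega> (s, 0)) (\<eta> (s, 0)) \<omega> \<eta> u)
    = distr (samples (pooled_idx s) \<Otimes>\<^sub>M unif 0 1) borel
      (\<lambda>(a, v). quantile_barycenter (fst a) (snd a)
        (randomized_rank (noisy_score s (fst a) (snd a)) (N s) j v))"
    (is "distr ?W borel ?\<Phi> = distr ?V borel ?G")
proof -
  let ?\<tau> = "transpose_coords (pooled_idx s) (s, 0) (s, j)"
  have [measurable]: "?\<tau> \<in> measurable (PiM (pooled_idx s) M) (PiM (pooled_idx s) M)"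
    if "M (s, 0) = M (s, j)" for M :: "nat \<times> nat \<Rightarrow> 'b measure"
    using that s j by (intro measurable_PiM_transpose) (auto intro: pooled_idx_memI)
  let ?\<sigma> = "\<lambda>(\<omega>, \<eta>). (?\<tau> \<omega>, ?\<tau> \<eta>)"
  have \<sigma>_measurable: "?\<sigma> \<in> measurable (samples (pooled_idx s)) (samples (pooled_idx s))"
    unfolding case_prod_unfold by measurable
  have H_measurable: "(\<lambda>(a, v). quantile_barycenter (fst a) (snd a) v) \<in> borel_measurable ?V"
    unfolding case_prod_unfold by measurable
  have G_measurable: "?G \<in> borel_measurable ?V"
    by (rule measurable_compose_randomized_rank[OF H_measurable]) measurable
  have "distr ?W ?W (\<lambda>(a, u). (?\<sigma> a, u)) = ?W"
    by (rule distr_pair_measure_eq[OF \<sigma>_measurable measurable_ident_sets[OF refl]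
          distr_samples_transpose[OF s j] distr_id])
       (rule prob_space_imp_sigma_finite[OF prob_space_tiebreak])
  then have "distr ?W borel ?\<Phi> = distr (distr ?W ?W (\<lambda>(a, u). (?\<sigma> a, u))) borel ?\<Phi>"
    by simp
  also have "\<dots> = distr ?W borel (?\<Phi> \<circ> (\<lambda>(a, u). (?\<sigma> a, u)))"
    by (rule distr_distr) (unfold case_prod_unfold; measurable)+
  also have "\<dots> = distr ?W borel (?G \<circ> (\<lambda>(a, u). (a, u s)))"
    by (rule distr_cong) (auto simp: predictor_transpose[OF s j] split: prod.split)
  also have "\<dots> = distr (distr ?W ?V (\<lambda>(a, u). (a, u s))) borel ?G"
    by (rule distr_distr[symmetric, OF G_measurable measurable_tiebreak_coordinate[OF s]])
  also have "\<dots> = distr ?V borel ?G"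
    by (simp only: distr_tiebreak_coordinate[OF s sigma_finite_samples_pooled[OF s]])
  finally show ?thesis .
qed

lemma distr_predictor_eq_quantile_barycenter:
  assumes s: "s \<in> {1..K}"
  shows "distr (samples (pooled_idx s) \<Otimes>\<^sub>M tiebreak) borel
      (\<lambda>((\<omega>, \<eta>), u). predictor s (\<omega> (s, 0)) (\<eta> (s, 0)) \<omega> \<eta> u)
    = distr (samples (pooled_idx s) \<Otimes>\<^sub>M unif 0 1) borel (\<lambda>((\<omega>, \<eta>), v). quantile_barycenter \<omega> \<eta> v)"
    (is "?L = distr ?V borel ?H")
proof (rule measure_eqI)
  fix T assume "T \<in> sets ?L"
  then have T: "T \<in> sets borel"
    by simp
  have H_eq: "?H = (\<lambda>(a, v). quantile_barycenter (fst a) (snd a) v)"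
    by (auto simp: fun_eq_iff)
  have H_measurable: "(\<lambda>(a, v). quantile_barycenter (fst a) (snd a) v) \<in> borel_measurable ?V"
    unfolding case_prod_unfold by measurable
  have "(real (N s) + 1) * emeasure ?L T = (\<Sum>j\<in>{0..N s}. emeasure ?L T)"
    by (simp add: ennreal_of_nat_eq_real_of_nat add.commute)
  also have "\<dots> = (\<Sum>j\<in>{0..N s}. emeasure (distr ?V borel (\<lambda>(a, v). quantile_barycenter (fst a) (snd a)
      (randomized_rank (noisy_score s (fst a) (snd a)) (N s) j v))) T)"
    using distr_predictor_eq_randomized_rank[OF s] by simp
  also have "\<dots> = (real (N s) + 1) * emeasure (distr ?V borel ?H) T"
    unfolding H_eq
    by (rule sum_emeasure_distr_randomized_rank[OF sigma_finite_samples_pooled[OF s] H_measurable _ T])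
       measurable
  finally show "emeasure ?L T = emeasure (distr ?V borel ?H) T"
    by (subst (asm) ennreal_mult_cancel_left) (auto simp: add_pos_nonneg)
qed simp

lemma quantile_barycenter_restrict:
  "quantile_barycenter (restrict \<omega> quantile_idx) (restrict \<eta> quantile_idx) = quantile_barycenter \<omega> \<eta>"
  unfolding quantile_barycenter_def noisy_score_def
  by (intro ext sum.cong refl arg_cong2[where f="(*)"] arg_cong2[where f=geninv] F2hat_cong)
     (auto simp: quantile_idx_def)

lemma distr_barycenter_restrict:
  assumes s: "s \<in> {1..K}"
  shows "distr (samples (pooled_idx s) \<Otimes>\<^sub>M unif 0 1) borel (\<lambda>((\<omega>, \<eta>), v). quantile_barycenter \<omega> \<eta> v)
    = distr (samples quantile_idx \<Otimes>\<^sub>M unif 0 1) borel (\<lambda>((\<omega>, \<eta>), v). quantile_barycenter \<omega> \<eta> v)"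
proof -
  let ?\<rho> = "\<lambda>(\<omega>, \<eta>). (restrict \<omega> quantile_idx, restrict \<eta> quantile_idx)"
  have \<rho>_measurable: "?\<rho> \<in> measurable (samples (pooled_idx s)) (samples quantile_idx)"
    unfolding case_prod_unfold
    by (intro measurable_Pair measurable_restrict_subset[OF quantile_idx_subset_pooled_idx] measurable_fst''
        measurable_snd'')
  have prob: "prob_space (lawX_given_S P (fst p))" if "p \<in> pooled_idx s" for p
    using fst_pooled_idx[OF s that] by (rule prob_space_lawX_given_S)
  have "distr (samples (pooled_idx s)) (samples quantile_idx) ?\<rho> = samples quantile_idx"
    using prob prob_space_noise
    by (intro distr_pair_measure_eq measurable_restrict_subset[OF quantile_idx_subset_pooled_idx]
        distr_PiM_restrict[OF _ quantile_idx_subset_pooled_idx] sigma_finite_noise_PiM) auto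
  then have restrict_samples: "distr (samples (pooled_idx s) \<Otimes>\<^sub>M unif 0 1) (samples quantile_idx \<Otimes>\<^sub>M unif 0 1)
      (\<lambda>(a, v). (?\<rho> a, v)) = samples quantile_idx \<Otimes>\<^sub>M unif 0 1"
    by (rule distr_pair_measure_eq[OF \<rho>_measurable measurable_ident_sets[OF refl] _ distr_id])
       (simp add: prob_space_imp_sigma_finite prob_space_unif)
  have map_measurable: "(\<lambda>(a, v). (?\<rho> a, v))
      \<in> measurable (samples (pooled_idx s) \<Otimes>\<^sub>M unif 0 1) (samples quantile_idx \<Otimes>\<^sub>M unif 0 1)"
    using measurable_Pair[OF measurable_compose[OF measurable_fst \<rho>_measurable] measurable_snd]
    by (simp add: case_prod_beta')
  have H_measurable: "(\<lambda>((\<omega>, \<eta>), v). quantile_barycenter \<omega> \<eta> v)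
      \<in> borel_measurable (samples quantile_idx \<Otimes>\<^sub>M unif 0 1)"
    unfolding case_prod_unfold by measurable
  have "distr (samples quantile_idx \<Otimes>\<^sub>M unif 0 1) borel (\<lambda>((\<omega>, \<eta>), v). quantile_barycenter \<omega> \<eta> v)
    = distr (samples (pooled_idx s) \<Otimes>\<^sub>M unif 0 1) borel
        ((\<lambda>((\<omega>, \<eta>), v). quantile_barycenter \<omega> \<eta> v) \<circ> (\<lambda>(a, v). (?\<rho> a, v)))"
    by (subst (1) restrict_samples[symmetric])
       (rule distr_distr[OF H_measurable map_measurable])
  also have "\<dots> = distr (samples (pooled_idx s) \<Otimes>\<^sub>M unif 0 1) borel (\<lambda>((\<omega>, \<eta>), v). quantile_barycenter \<omega> \<eta> v)"
    by (rule distr_cong) (auto simp: quantile_barycenter_restrict)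
  finally show ?thesis ..
qed

lemma cond_law_eq_quantile_barycenter:
  assumes "s \<in> {1..K}"
  shows "cond_law (Omega P K N \<sigma>) {\<omega> \<in> space (Omega P K N \<sigma>). Sof (fst \<omega>) = s} (Pihat f w K N)
    = distr (samples quantile_idx \<Otimes>\<^sub>M unif 0 1) borel (\<lambda>((\<omega>, \<eta>), v). quantile_barycenter \<omega> \<eta> v)"
  using assms
  by (simp only: cond_law_eq_distr_lawX distr_predictor_pooled distr_predictor_eq_quantile_barycenter
      distr_barycenter_restrict)

end

theorem theorem5:
  fixes P :: "((real ^ 'p) \<times> nat \<times> real) measure"
    and f :: "real ^ 'p \<Rightarrow> nat \<Rightarrow> real"
    and K :: nat and N :: "nat \<Rightarrow> nat" and w :: "nat \<Rightarrow> real" and \<sigma> :: real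
  assumes "prob_space P"
    and "sets P = sets (borel \<Otimes>\<^sub>M count_space UNIV \<Otimes>\<^sub>M borel)"
    and "measure P {z \<in> space P. Sof z \<in> {1..K}} = 1"
    and "\<forall>s\<in>{1..K}. measure P {z \<in> space P. Sof z = s} > 0"
    and "(\<lambda>(x, s). f x s) \<in> borel_measurable (borel \<Otimes>\<^sub>M count_space UNIV)"
    and "\<forall>s\<in>{1..K}. w s \<ge> 0" and "(\<Sum>s\<in>{1..K}. w s) = 1"
    and "\<forall>s\<in>{1..K}. N s \<ge> 1"
    and "\<sigma> > 0"
  shows "\<forall>s\<in>{1..K}. \<forall>s'\<in>{1..K}.
     cond_law (Omega P K N \<sigma>) {\<omega> \<in> space (Omega P K N \<sigma>). Sof (fst \<omega>) = s} (Pihat f w K N)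
   = cond_law (Omega P K N \<sigma>) {\<omega> \<in> space (Omega P K N \<sigma>). Sof (fst \<omega>) = s'} (Pihat f w K N)"
proof -
  interpret fair_predictor_setting P f K N w \<sigma>
    using assms(1,2,4,5,9) by (intro fair_predictor_setting.intro) auto
  show ?thesis
    by (intro ballI) (simp only: cond_law_eq_quantile_barycenter)
qed

end
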